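(* Let $X$ be an exponential vector space over a field $K$. Every basis of $X\smallsetminus X_0$ is a maximal orderly independent subset of $X\smallsetminus X_0$, i.e. no orderly independent subset of $X\smallsetminus X_0$ properly contains it.
   Context: An exponential vector space (evs) over a field $K$ is a partially ordered set $(X,\leq)$ with a binary operation $+$ on $X$ and a map $K\times X\to X$, $(\alpha,x)\mapsto \alpha x$, such that: (A1) $(X,+)$ is a commutative semigroup with identity $\theta$; (A2) $x\leq y$ implies $x+z\leq y+z$ and $\alpha x\leq \alpha y$ for all $z\in X$, $\alpha\in K$; (A3) $\alpha(x+y)=\alpha x+\alpha y$, $\alpha(\beta x)=(\alpha\beta)x$, $(\alpha+\beta)x\leq \alpha x+\beta x$, $1x=x$; (A4) $\alpha x=\theta$ iff $\alpha=0$ or $x=\theta$; (A5) $x+(-1)x=\theta$ iff $x\in X_0$, where $X_0:=\{z\in X: y\not\leq z \text{ for all } y\in X\smallsetminus\{z\}\}$ (the set of minimal elements, called the primitive space; it is a vector space over $K$); (A6) for each $x\in X$ there is $p\in X_0$ with $p\leq x$. For $x\in X\smallsetminus X_0$ let $L(x):=\{z\in X: z\geq \alpha x+p \text{ for some } \alpha\in K\smallsetminus\{0\},\ p\in X_0\}$. A subset $B\subseteq X\smallsetminus X_0$ generates $X\smallsetminus X_0$ if $X\smallsetminus X_0=\bigcup_{b\in B}L(b)$. Elements $x,y\in X\smallsetminus X_0$ are orderly dependent if $x\in L(y)$ or $y\in L(x)$, and orderly independent otherwise; $B\subseteq X\smallsetminus X_0$ is orderly independent if any two distinct members of $B$ are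 orderly independent. A basis of $X\smallsetminus X_0$ is an orderly independent subset of $X\smallsetminus X_0$ that generates $X\smallsetminus X_0$. *)

theory Defs
  imports Main
begin

definition primitive :: "('x \<Rightarrow> 'x \<Rightarrow> bool) \<Rightarrow> 'x set" where
  "primitive le = {z. \<forall>y. y \<noteq> z \<longrightarrow> \<not> le y z}"

definition evs :: "('x \<Rightarrow> 'x \<Rightarrow> bool) \<Rightarrow> ('x \<Rightarrow> 'x \<Rightarrow> 'x) \<Rightarrow> 'x
                   \<Rightarrow> ('k::field \<Rightarrow> 'x \<Rightarrow> 'x) \<Rightarrow> bool" where
  "evs le add theta smul \<longleftrightarrow>
     \<comment> \<open>partial order\<close>
     (\<forall>x. le x x) \<and> (\<forall>x y. le x y \<and> le y x \<longrightarrow> x = y) \<and>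
     (\<forall>x y z. le x y \<and> le y z \<longrightarrow> le x z) \<and>
     \<comment> \<open>(A1)\<close>
     (\<forall>x y z. add (add x y) z = add x (add y z)) \<and> (\<forall>x y. add x y = add y x) \<and>
     (\<forall>x. add x theta = x) \<and>
     \<comment> \<open>(A2)\<close>
     (\<forall>x y z (a::'k). le x y \<longrightarrow> le (add x z) (add y z) \<and> le (smul a x) (smul a y)) \<and>
     \<comment> \<open>(A3)\<close>
     (\<forall>(a::'k) x y. smul a (add x y) = add (smul a x) (smul a y)) \<and>
     (\<forall>(a::'k) b x. smul a (smul b x) = smul (a * b) x) \<and>
     (\<forall>(a::'k) b x. le (smul (a + b) x) (add (smul a x) (smul b x))) \<and>
     (\<forall>x. smul 1 x = x) \<and>
     \<comment> \<open>(A4)\<close>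
     (\<forall>(a::'k) x. smul a x = theta \<longleftrightarrow> a = 0 \<or> x = theta) \<and>
     \<comment> \<open>(A5)\<close>
     (\<forall>x. add x (smul (-1::'k) x) = theta \<longleftrightarrow> x \<in> primitive le) \<and>
     \<comment> \<open>(A6)\<close>
     (\<forall>x. \<exists>p \<in> primitive le. le p x)"

definition Lset :: "('x \<Rightarrow> 'x \<Rightarrow> bool) \<Rightarrow> ('x \<Rightarrow> 'x \<Rightarrow> 'x) \<Rightarrow> ('k::field \<Rightarrow> 'x \<Rightarrow> 'x)
                    \<Rightarrow> 'x \<Rightarrow> 'x set" where
  "Lset le add smul x = {z. \<exists>(a::'k) p. a \<noteq> 0 \<and> p \<in> primitive le \<and> le (add (smul a x) p) z}"

definition generates :: "('x \<Rightarrow> 'x \<Rightarrow> bool) \<Rightarrow> ('x \<Rightarrow> 'x \<Rightarrow> 'x) \<Rightarrow> ('k::field \<Rightarrow> 'x \<Rightarrow> 'x)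
                    \<Rightarrow> 'x set \<Rightarrow> bool" where
  "generates le add smul B \<longleftrightarrow> B \<subseteq> - primitive le \<and>
     - primitive le = (\<Union>b\<in>B. Lset le add smul b)"

definition orderly_dependent :: "('x \<Rightarrow> 'x \<Rightarrow> bool) \<Rightarrow> ('x \<Rightarrow> 'x \<Rightarrow> 'x) \<Rightarrow> ('k::field \<Rightarrow> 'x \<Rightarrow> 'x)
                    \<Rightarrow> 'x \<Rightarrow> 'x \<Rightarrow> bool" where
  "orderly_dependent le add smul x y \<longleftrightarrow>
     x \<in> Lset le add smul y \<or> y \<in> Lset le add smul x"

definition orderly_independent_set :: "('x \<Rightarrow> 'x \<Rightarrow> bool) \<Rightarrow> ('x \<Rightarrow> 'x \<Rightarrow> 'x) \<Rightarrow> ('k::field \<Rightarrow> 'x \<Rightarrow> 'x)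
                    \<Rightarrow> 'x set \<Rightarrow> bool" where
  "orderly_independent_set le add smul B \<longleftrightarrow> B \<subseteq> - primitive le \<and>
     (\<forall>x\<in>B. \<forall>y\<in>B. x \<noteq> y \<longrightarrow> \<not> orderly_dependent le add smul x y)"

definition is_basis :: "('x \<Rightarrow> 'x \<Rightarrow> bool) \<Rightarrow> ('x \<Rightarrow> 'x \<Rightarrow> 'x) \<Rightarrow> ('k::field \<Rightarrow> 'x \<Rightarrow> 'x)
                    \<Rightarrow> 'x set \<Rightarrow> bool" where
  "is_basis le add smul B \<longleftrightarrow>
     orderly_independent_set le add smul B \<and> generates le add smul B"

end

theory Submission
  imports Defs
begin

text \<open>An element of an orderly independent superset of a generating set \<open>B\<close> lies in
  \<open>L(b)\<close> for some \<open>b \<in> B\<close>, hence is orderly dependent on \<open>b\<close> and must equal it.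
  No axiom of an exponential vector space is needed for this.\<close>

lemma orderly_independent_superset_of_generating_set:
  assumes gen: "generates le add smul B"
    and indep: "orderly_independent_set le add smul C"
    and "B \<subseteq> C"
  shows "C = B"
proof
  show "C \<subseteq> B"
  proof
    fix c assume "c \<in> C"
    with indep have "c \<in> - primitive le"
      unfolding orderly_independent_set_def by blast
    with gen obtain b where "b \<in> B" and "c \<in> Lset le add smul b"
      unfolding generates_def by blast
    then have "orderly_dependent le add smul c b"
      unfolding orderly_dependent_def by blast
    with indep \<open>c \<in> C\<close> \<open>b \<in> B\<close> \<open>B \<subseteq> C\<close> have "c = b"
      unfolding orderly_independent_set_def by blast
    with \<open>b \<in> B\<close> show "c \<in> B" by simp
  qed
qed fact

theorem mainTheorem19:
  fixes le :: "'x \<Rightarrow> 'x \<Rightarrow> bool" and add :: "'x \<Rightarrow> 'x \<Rightarrow> 'x" and theta :: 'x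
    and smul :: "'k::field \<Rightarrow> 'x \<Rightarrow> 'x" and B :: "'x set"
  assumes "evs le add theta smul"
    and "is_basis le add smul B"
  shows "\<not> (\<exists>C. orderly_independent_set le add smul C \<and> B \<subset> C)"
  using assms(2) orderly_independent_superset_of_generating_set
  unfolding is_basis_def by blast

end
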